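(* As a right ideal of $\Sigma(B_n)$, $I_n^0$ is generated by $X_{\{0\}}$, i.e. $I_n^0=X_{\{0\}}\cdot\Sigma(B_n)$. As a right ideal of $\mathcal{P}_n$, $\mathring{\mathcal{P}}_n$ is generated by $\mathring{P}_\emptyset$, i.e. $\mathring{\mathcal{P}}_n=\mathring{P}_\emptyset\cdot\mathcal{P}_n$.
   Context: Group algebras over $\mathbb{Q}$ with product composition $(uv)(i)=u(v(i))$. $B_n$: signed permutations $w=w_1\dots w_n$ (bijections of $\{\pm1,\dots,\pm n\}$ with $w(-i)=-w(i)$), values ordered $\cdots<-2<-1<1<2<\cdots$, $w_0=0$, $\mathrm{Des}(w)=\{i\in\{0,\dots,n-1\}:w_i>w_{i+1}\}$; $X_J=\sum_{\mathrm{Des}(w)\subseteq J}w$ for $J\subseteq\{0,\dots,n-1\}$; $\Sigma(B_n)=\mathrm{span}\{X_J\}$ (a subalgebra of $\mathbb{Q}B_n$); $I_n^0=\mathrm{span}\{X_J:0\in J\}$ (a two-sided ideal of $\Sigma(B_n)$). Note $X_{\{0\}}$ is the sum of all $w\in B_n$ with $w_1<w_2<\dots<w_n$. For $u\in\mathfrak{S}_n$: $\mathrm{Peak}(u)=\{i\in[n-1]:u_{i-1}<u_i>u_{i+1}\}$ with $u_0=0$, $\mathring{\mathrm{Peak}}(u)=\{i\in\{2,\dots,n-1\}:u_{i-1}<u_i>u_{i+1}\}$; $\mathcal{F}_n$: subsets of $[n-1]$ with no two consecutive integers, $\mathring{\mathcal{F}}_n=\{F\in\mathcal{F}_n:1\notin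 F\}$; $P_F=\sum_{\mathrm{Peak}(u)=F}u$, $\mathring{P}_F=\sum_{\mathring{\mathrm{Peak}}(u)=F}u$; $\mathcal{P}_n=\mathrm{span}\{P_F\}$ (the peak algebra), $\mathring{\mathcal{P}}_n=\mathrm{span}\{\mathring{P}_F\}$. Thus $\mathring{P}_\emptyset$ is the sum of all $u$ with $u_1>\dots>u_i<u_{i+1}<\dots<u_n$ for some $i$. *)

theory Defs
  imports Complex_Main "HOL-Combinatorics.Permutations"
begin

text \<open>An element of the group algebra QG of a finite group G of functions
(composition product) is a function G to rat (values outside G are irrelevant
and taken to be 0). Product: (a*b)(w) = sum over u v in G with u o v = w of a(u) b(v),
matching (uv)(i) = u(v(i)).\<close>

definition galg_mult :: "('a \<Rightarrow> 'a) set \<Rightarrow> (('a \<Rightarrow> 'a) \<Rightarrow> rat) \<Rightarrow> (('a \<Rightarrow> 'a) \<Rightarrow> rat) \<Rightarrow> (('a \<Rightarrow> 'a) \<Rightarrow> rat)" where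
  "galg_mult G a b = (\<lambda>w. \<Sum>u\<in>G. \<Sum>v\<in>G. if u \<circ> v = w then a u * b v else 0)"

definition gsum :: "('a \<Rightarrow> 'a) set \<Rightarrow> (('a \<Rightarrow> 'a) \<Rightarrow> rat)" where
  "gsum S = (\<lambda>w. if w \<in> S then 1 else 0)"

definition qspan :: "'i set \<Rightarrow> ('i \<Rightarrow> ('b \<Rightarrow> rat)) \<Rightarrow> ('b \<Rightarrow> rat) set" where
  "qspan I X = {f. \<exists>c. f = (\<lambda>w. \<Sum>i\<in>I. c i * X i w)}"

text \<open>Signed permutations: bijections w of {-n..n}-{0} with w(-i) = -w(i),
extended by the identity outside; w_i = w i and w_0 = w 0 = 0.\<close>
definition signed_perms :: "nat \<Rightarrow> (int \<Rightarrow> int) set" where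
  "signed_perms n = {w. w permutes ({-int n..int n} - {0}) \<and> (\<forall>i. w (-i) = - w i)}"

definition DesB :: "nat \<Rightarrow> (int \<Rightarrow> int) \<Rightarrow> nat set" where
  "DesB n w = {i \<in> {0..<n}. w (int i) > w (int i + 1)}"

definition XB :: "nat \<Rightarrow> nat set \<Rightarrow> ((int \<Rightarrow> int) \<Rightarrow> rat)" where
  "XB n J = gsum {w \<in> signed_perms n. DesB n w \<subseteq> J}"

definition SigmaB :: "nat \<Rightarrow> ((int \<Rightarrow> int) \<Rightarrow> rat) set" where
  "SigmaB n = qspan (Pow {0..<n}) (XB n)"

definition IB0 :: "nat \<Rightarrow> ((int \<Rightarrow> int) \<Rightarrow> rat) set" where
  "IB0 n = qspan {J \<in> Pow {0..<n}. 0 \<in> J} (XB n)"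

definition sym_perms :: "nat \<Rightarrow> (nat \<Rightarrow> nat) set" where
  "sym_perms n = {u. u permutes {1..n}}"

text \<open>With u 0 = 0 automatically (u fixes 0).\<close>
definition Peak :: "nat \<Rightarrow> (nat \<Rightarrow> nat) \<Rightarrow> nat set" where
  "Peak n u = {i \<in> {1..n-1}. u (i - 1) < u i \<and> u i > u (i + 1)}"

definition PeakC :: "nat \<Rightarrow> (nat \<Rightarrow> nat) \<Rightarrow> nat set" where
  "PeakC n u = {i \<in> {2..n-1}. u (i - 1) < u i \<and> u i > u (i + 1)}"

definition Fam :: "nat \<Rightarrow> nat set set" where
  "Fam n = {F. F \<subseteq> {1..n-1} \<and> (\<forall>i\<in>F. i + 1 \<notin> F)}"

definition FamC :: "nat \<Rightarrow> nat set set" where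
  "FamC n = {F \<in> Fam n. 1 \<notin> F}"

definition PP :: "nat \<Rightarrow> nat set \<Rightarrow> ((nat \<Rightarrow> nat) \<Rightarrow> rat)" where
  "PP n F = gsum {u \<in> sym_perms n. Peak n u = F}"

definition PPC :: "nat \<Rightarrow> nat set \<Rightarrow> ((nat \<Rightarrow> nat) \<Rightarrow> rat)" where
  "PPC n F = gsum {u \<in> sym_perms n. PeakC n u = F}"

definition PeakAlg :: "nat \<Rightarrow> ((nat \<Rightarrow> nat) \<Rightarrow> rat) set" where
  "PeakAlg n = qspan (Fam n) (PP n)"

definition PeakAlgC :: "nat \<Rightarrow> ((nat \<Rightarrow> nat) \<Rightarrow> rat) set" where
  "PeakAlgC n = qspan (FamC n) (PPC n)"

end

theory Submission
  imports Defs
begin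

text \<open>
  \<open>X\<^bsub>{0}\<^esub>\<close> is the sum of the \<open>2\<^sup>n\<close> signed permutations \<open>u\<close> with \<open>u\<^sub>1 < \<dots> < u\<^sub>n\<close>, and
  \<open>u\<^sup>-\<^sup>1\<close> is increasing on \<open>T = {u\<^sub>1, \<dots>, u\<^sub>n}\<close> and on \<open>-T\<close>. Hence the descent set of
  \<open>u\<^sup>-\<^sup>1 w\<close> is determined by that of \<open>w\<close> and by the sign pattern of \<open>u\<^sup>-\<^sup>1 w\<close>; counting sign
  patterns writes \<open>X\<^bsub>{0}\<^esub> X\<^sub>K\<close> as a sum of terms \<open>X\<^sub>J\<close> with \<open>{0} \<union> K \<subseteq> J\<close>, in which
  \<open>J = {0} \<union> K\<close> occurs with positive multiplicity. So \<open>X\<^bsub>{0}\<^esub> \<Sigma>(B\<^sub>n) \<subseteq> I\<^sub>n\<^sup>0\<close>, and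
  induction on \<open>n - |J|\<close> puts every \<open>X\<^sub>J\<close> with \<open>0 \<in> J\<close> into \<open>X\<^bsub>{0}\<^esub> \<Sigma>(B\<^sub>n)\<close>.

  Forgetting signs is a group map \<open>B\<^sub>n \<rightarrow> S\<^sub>n\<close> and induces an algebra map \<open>\<phi>\<close>. Counting
  the signed lifts of a permutation that have no descent outside \<open>K\<close> gives
  \<open>\<phi>(X\<^sub>K) = 2\<^bsup>|K|\<^esup> \<Theta>\<^sub>K\<close>, where \<open>\<Theta>\<^sub>K\<close> sums the permutations all of whose peaks lie
  in \<open>K \<union> (K + 1)\<close>. The \<open>\<Theta>\<^sub>K\<close> are unitriangular with respect to the peak classes, so they
  span \<open>PeakAlg n\<close>, and those with \<open>0 \<in> K\<close> span \<open>PeakAlgC n\<close>. Finally \<open>\<Theta>\<^bsub>{0}\<^esub>\<close> is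
  \<open>PPC n {}\<close>, so applying \<open>\<phi>/2\<close> to the first statement gives the second.
\<close>

section \<open>Linear spans and group algebras\<close>

lemma qspan_generator: "finite I \<Longrightarrow> i \<in> I \<Longrightarrow> X i \<in> qspan I X"
  unfolding qspan_def
  by (intro CollectI exI[of _ "\<lambda>j. of_bool (j = i)"]) (simp add: if_distrib cong: if_cong)

lemma qspan_zero: "(\<lambda>w. 0) \<in> qspan I X"
  unfolding qspan_def by (auto intro!: exI[of _ "\<lambda>_. 0"])

lemma qspan_add:
  assumes "f \<in> qspan I X" "g \<in> qspan I X"
  shows "(\<lambda>w. f w + g w) \<in> qspan I X"
proof -
  obtain c d where "f = (\<lambda>w. \<Sum>i\<in>I. c i * X i w)" "g = (\<lambda>w. \<Sum>i\<in>I. d i * X i w)"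
    using assms unfolding qspan_def by auto
  then show ?thesis
    unfolding qspan_def by (intro CollectI exI[of _ "\<lambda>i. c i + d i"]) (simp add: sum.distrib ring_distribs)
qed

lemma qspan_smult:
  assumes "f \<in> qspan I X"
  shows "(\<lambda>w. a * f w) \<in> qspan I X"
proof -
  obtain c where "f = (\<lambda>w. \<Sum>i\<in>I. c i * X i w)" using assms unfolding qspan_def by auto
  then show ?thesis
    unfolding qspan_def by (intro CollectI exI[of _ "\<lambda>i. a * c i"]) (simp add: sum_distrib_left mult.assoc)
qed

lemma qspan_diff: "f \<in> qspan I X \<Longrightarrow> g \<in> qspan I X \<Longrightarrow> (\<lambda>w. f w - g w) \<in> qspan I X"
  using qspan_add[of f I X "\<lambda>w. (-1) * g w"] qspan_smult[of g I X "-1"] by simp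

lemma qspan_sum:
  "finite A \<Longrightarrow> (\<And>a. a \<in> A \<Longrightarrow> f a \<in> qspan I X) \<Longrightarrow> (\<lambda>w. \<Sum>a\<in>A. f a w) \<in> qspan I X"
proof (induction A rule: finite_induct)
  case empty
  then show ?case by (simp add: qspan_zero)
next
  case (insert x F)
  then show ?case using qspan_add[of "f x" I X "\<lambda>w. \<Sum>a\<in>F. f a w"] by simp
qed

lemma qspan_subsetI:
  assumes "finite I" "\<And>i. i \<in> I \<Longrightarrow> X i \<in> qspan I' Y"
  shows "qspan I X \<subseteq> qspan I' Y"
proof
  fix f
  assume "f \<in> qspan I X"
  then obtain c where f: "f = (\<lambda>w. \<Sum>i\<in>I. c i * X i w)" unfolding qspan_def by auto
  show "f \<in> qspan I' Y"
    unfolding f by (intro qspan_sum[OF assms(1)] qspan_smult assms(2))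
qed

lemma qspan_linear_image:
  assumes "\<And>c. L (\<lambda>w. \<Sum>i\<in>I. c i * X i w) = (\<lambda>w. \<Sum>i\<in>I. c i * L (X i) w)"
  shows "L ` qspan I X = qspan I (\<lambda>i. L (X i))"
  unfolding qspan_def using assms by (auto simp: image_def)

lemma qspan_rescale:
  assumes "finite I" "\<And>i. i \<in> I \<Longrightarrow> X i = (\<lambda>w. c i * Y i w)" "\<And>i. i \<in> I \<Longrightarrow> c i \<noteq> 0"
  shows "qspan I X = qspan I Y"
proof
  show "qspan I X \<subseteq> qspan I Y"
    using assms by (intro qspan_subsetI) (auto intro!: qspan_smult qspan_generator)
  show "qspan I Y \<subseteq> qspan I X"
  proof (rule qspan_subsetI[OF assms(1)])
    fix i
    assume i: "i \<in> I"
    have "(\<lambda>w. (1 / c i) * X i w) \<in> qspan I X"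
      using i assms(1) by (intro qspan_smult qspan_generator)
    then show "Y i \<in> qspan I X" using assms(2,3)[OF i] by simp
  qed
qed

lemma qspan_triangular:
  fixes m :: "'i \<Rightarrow> nat"
  assumes "finite I" "finite K"
    and tri: "\<And>i. i \<in> I \<Longrightarrow>
      \<exists>k\<in>K. \<exists>c. c \<noteq> 0 \<and> (\<lambda>w. Y k w - c * X i w) \<in> qspan {j \<in> I. m j < m i} X"
    and "i \<in> I"
  shows "X i \<in> qspan K Y"
  using \<open>i \<in> I\<close>
proof (induction "m i" arbitrary: i rule: less_induct)
  case less
  obtain k c where k: "k \<in> K" "c \<noteq> 0"
    and rest: "(\<lambda>w. Y k w - c * X i w) \<in> qspan {j \<in> I. m j < m i} X"
    using tri[OF less.prems] by blast
  have "qspan {j \<in> I. m j < m i} X \<subseteq> qspan K Y"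
    using assms(1) less.hyps by (intro qspan_subsetI) auto
  then have "(\<lambda>w. Y k w - c * X i w) \<in> qspan K Y" using rest by blast
  from qspan_diff[OF qspan_generator[OF assms(2) k(1)] this]
  have "(\<lambda>w. (1 / c) * (Y k w - (Y k w - c * X i w))) \<in> qspan K Y"
    by (rule qspan_smult)
  moreover have "X i = (\<lambda>w. (1 / c) * (Y k w - (Y k w - c * X i w)))"
    using k(2) by (simp add: fun_eq_iff)
  ultimately show ?case by simp
qed

lemma galg_mult_of_bool:
  "galg_mult G a b w = (\<Sum>u\<in>G. \<Sum>v\<in>G. of_bool (u \<circ> v = w) * a u * b v)"
  unfolding galg_mult_def by (intro sum.cong refl) auto

lemma galg_mult_sum_right:
  "galg_mult G a (\<lambda>w. \<Sum>i\<in>I. c i * X i w) = (\<lambda>w. \<Sum>i\<in>I. c i * galg_mult G a (X i) w)"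
  by (rule ext)
    (simp add: galg_mult_of_bool sum_distrib_left sum_distrib_right mult_ac sum.swap[of _ I])

lemma galg_mult_scale_left:
  "galg_mult G (\<lambda>x. r * a x) b = (\<lambda>w. r * galg_mult G a b w)"
  by (rule ext) (simp add: galg_mult_of_bool sum_distrib_left mult_ac)

lemma galg_mult_outside:
  assumes "\<And>u v. u \<in> G \<Longrightarrow> v \<in> G \<Longrightarrow> u \<circ> v \<in> G" "w \<notin> G"
  shows "galg_mult G a b w = 0"
  unfolding galg_mult_def using assms by (auto intro!: sum.neutral)

lemma galg_mult_eq_sum_inv:
  assumes "finite G" "\<And>u. u \<in> G \<Longrightarrow> bij u"
    and "\<And>u v. u \<in> G \<Longrightarrow> v \<in> G \<Longrightarrow> u \<circ> v \<in> G" "\<And>u. u \<in> G \<Longrightarrow> inv u \<in> G"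
    and "w \<in> G"
  shows "galg_mult G a b w = (\<Sum>u\<in>G. a u * b (inv u \<circ> w))"
  unfolding galg_mult_def
proof (intro sum.cong refl)
  fix u
  assume u: "u \<in> G"
  have "u \<circ> v = w \<longleftrightarrow> v = inv u \<circ> w" for v
    using assms(2)[OF u] by (auto simp: fun_eq_iff bij_inv_eq_iff)
  then have "(\<Sum>v\<in>G. if u \<circ> v = w then a u * b v else 0) =
      (\<Sum>v\<in>G. if v = inv u \<circ> w then a u * b v else 0)"
    by (intro sum.cong) auto
  also have "\<dots> = a u * b (inv u \<circ> w)"
    using assms u by simp
  finally show "(\<Sum>v\<in>G. if u \<circ> v = w then a u * b v else 0) = a u * b (inv u \<circ> w)" .
qed

lemma gsum_eq_sum_fibers:
  assumes "finite A" "f ` G \<subseteq> A"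
  shows "gsum {x \<in> G. P (f x)} = (\<lambda>w. \<Sum>a\<in>{a \<in> A. P a}. gsum {x \<in> G. f x = a} w)"
proof
  fix w
  show "gsum {x \<in> G. P (f x)} w = (\<Sum>a\<in>{a \<in> A. P a}. gsum {x \<in> G. f x = a} w)"
    using assms by (cases "w \<in> G") (auto simp: gsum_def image_subset_iff)
qed

definition galg_push ::
  "('a \<Rightarrow> 'a) set \<Rightarrow> (('a \<Rightarrow> 'a) \<Rightarrow> ('b \<Rightarrow> 'b)) \<Rightarrow> (('a \<Rightarrow> 'a) \<Rightarrow> rat) \<Rightarrow> (('b \<Rightarrow> 'b) \<Rightarrow> rat)"
  where "galg_push G h a = (\<lambda>x. \<Sum>w\<in>{w \<in> G. h w = x}. a w)"

lemma galg_push_sum: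
  "galg_push G h (\<lambda>w. \<Sum>i\<in>I. c i * X i w) = (\<lambda>x. \<Sum>i\<in>I. c i * galg_push G h (X i) x)"
  unfolding galg_push_def by (simp add: sum_distrib_left sum.swap[of _ I])

lemma galg_push_outside: "h ` G \<subseteq> H \<Longrightarrow> x \<notin> H \<Longrightarrow> galg_push G h a x = 0"
  unfolding galg_push_def by (intro sum.neutral) auto

lemma sum_over_fibers:
  assumes "finite A" "finite T" "f ` A \<subseteq> T"
  shows "(\<Sum>y\<in>T. \<Sum>x\<in>{x \<in> A. f x = y}. g x y) = (\<Sum>x\<in>A. g x (f x))"
proof -
  have "(\<Sum>y\<in>T. \<Sum>x\<in>{x \<in> A. f x = y}. g x y) = (\<Sum>y\<in>T. \<Sum>x\<in>{x \<in> A. f x = y}. g x (f x))"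
    by (intro sum.cong refl) auto
  also have "\<dots> = (\<Sum>x\<in>A. g x (f x))" by (rule sum.group[OF assms])
  finally show ?thesis .
qed

lemma mult_sum_sum:
  fixes c :: "'a :: comm_semiring_0"
  shows "c * sum f A * sum g B = (\<Sum>u\<in>A. \<Sum>v\<in>B. c * f u * g v)"
  by (subst mult.assoc, subst sum_product) (simp add: sum_distrib_left mult.assoc)

lemma galg_push_mult:
  assumes fin: "finite G" "finite H" and img: "h ` G \<subseteq> H"
    and comp: "\<And>u v. u \<in> G \<Longrightarrow> v \<in> G \<Longrightarrow> u \<circ> v \<in> G"
    and hom: "\<And>u v. u \<in> G \<Longrightarrow> v \<in> G \<Longrightarrow> h (u \<circ> v) = h u \<circ> h v"
  shows "galg_push G h (galg_mult G a b) = galg_mult H (galg_push G h a) (galg_push G h b)"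
proof
  fix x
  have "galg_push G h (galg_mult G a b) x =
      (\<Sum>u\<in>G. \<Sum>v\<in>G. \<Sum>w\<in>{w \<in> G. h w = x}. of_bool (u \<circ> v = w) * a u * b v)"
    unfolding galg_push_def galg_mult_of_bool
    by (subst sum.swap, rule sum.cong[OF refl], rule sum.swap)
  also have "\<dots> = (\<Sum>u\<in>G. \<Sum>v\<in>G. of_bool (h u \<circ> h v = x) * a u * b v)"
    using fin comp hom by (intro sum.cong refl) (simp flip: sum_distrib_right)
  also have "\<dots> = (\<Sum>u'\<in>H. \<Sum>u\<in>{u \<in> G. h u = u'}. \<Sum>v'\<in>H. \<Sum>v\<in>{v \<in> G. h v = v'}.
      of_bool (u' \<circ> v' = x) * a u * b v)"
    using fin img by (simp add: sum_over_fibers)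
  also have "\<dots> = (\<Sum>u'\<in>H. \<Sum>v'\<in>H. \<Sum>u\<in>{u \<in> G. h u = u'}. \<Sum>v\<in>{v \<in> G. h v = v'}.
      of_bool (u' \<circ> v' = x) * a u * b v)"
    by (intro sum.cong refl) (rule sum.swap)
  also have "\<dots> = galg_mult H (galg_push G h a) (galg_push G h b) x"
    unfolding galg_mult_of_bool galg_push_def
    by (simp only: mult_sum_sum)
  finally show "galg_push G h (galg_mult G a b) x = galg_mult H (galg_push G h a) (galg_push G h b) x" .
qed

section \<open>Signed permutations\<close>

definition signed_dom :: "nat \<Rightarrow> int set" where
  "signed_dom n = {-int n..int n} - {0}"

lemma finite_signed_dom [simp]: "finite (signed_dom n)"
  unfolding signed_dom_def by simp

lemma signed_dom_iff: "t \<in> signed_dom n \<longleftrightarrow> t \<noteq> 0 \<and> \<bar>t\<bar> \<le> int n"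
  unfolding signed_dom_def by auto

lemma uminus_in_signed_dom_iff: "- t \<in> signed_dom n \<longleftrightarrow> t \<in> signed_dom n"
  unfolding signed_dom_iff by auto

lemma signed_perms_permutes: "w \<in> signed_perms n \<Longrightarrow> w permutes signed_dom n"
  unfolding signed_perms_def signed_dom_def by auto

lemma signed_perms_odd: "w \<in> signed_perms n \<Longrightarrow> w (- i) = - w i"
  unfolding signed_perms_def by auto

lemma signed_permsI: "w permutes signed_dom n \<Longrightarrow> (\<And>i. w (- i) = - w i) \<Longrightarrow> w \<in> signed_perms n"
  unfolding signed_perms_def signed_dom_def by auto

lemma signed_perms_in_dom: "w \<in> signed_perms n \<Longrightarrow> t \<in> signed_dom n \<Longrightarrow> w t \<in> signed_dom n"
  by (metis signed_perms_permutes permutes_in_image)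

lemma signed_perms_fixes: "w \<in> signed_perms n \<Longrightarrow> t \<notin> signed_dom n \<Longrightarrow> w t = t"
  by (metis signed_perms_permutes permutes_not_in)

lemma signed_perms_zero: "w \<in> signed_perms n \<Longrightarrow> w 0 = 0"
  by (rule signed_perms_fixes) (simp_all add: signed_dom_def)

lemma inj_signed_perms: "w \<in> signed_perms n \<Longrightarrow> inj w"
  by (metis signed_perms_permutes permutes_inj)

lemma bij_signed_perms: "w \<in> signed_perms n \<Longrightarrow> bij w"
  using signed_perms_permutes permutes_bij by blast

lemma signed_perms_comp:
  assumes "u \<in> signed_perms n" "v \<in> signed_perms n"
  shows "u \<circ> v \<in> signed_perms n"
  using assms by (intro signed_permsI) (simp_all add: signed_perms_permutes permutes_compose signed_perms_odd)

lemma signed_perms_inv: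
  assumes "u \<in> signed_perms n"
  shows "inv u \<in> signed_perms n"
proof (rule signed_permsI)
  show "inv u permutes signed_dom n"
    using assms by (simp add: signed_perms_permutes permutes_inv)
  fix i
  have b: "bij u" using assms by (rule bij_signed_perms)
  then have "u (- inv u i) = - i"
    using assms by (simp add: signed_perms_odd surj_f_inv_f bij_is_surj)
  then show "inv u (- i) = - inv u i"
    using b by (metis bij_inv_eq_iff)
qed

lemma finite_signed_perms: "finite (signed_perms n)"
  by (rule finite_subset[OF _ finite_permutations[OF finite_signed_dom]])
    (auto dest: signed_perms_permutes)

lemma galg_mult_signed_perms:
  "w \<in> signed_perms n \<Longrightarrow>
    galg_mult (signed_perms n) a b w = (\<Sum>u\<in>signed_perms n. a u * b (inv u \<circ> w))"
  by (rule galg_mult_eq_sum_inv)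
    (simp_all add: finite_signed_perms bij_signed_perms signed_perms_comp signed_perms_inv)

lemma galg_mult_signed_perms_outside:
  "w \<notin> signed_perms n \<Longrightarrow> galg_mult (signed_perms n) a b w = 0"
  by (rule galg_mult_outside) (simp_all add: signed_perms_comp)

lemma XB_apply: "XB n J w = of_bool (w \<in> signed_perms n \<and> DesB n w \<subseteq> J)"
  unfolding XB_def gsum_def by simp

lemma DesB_subset: "DesB n w \<subseteq> {0..<n}"
  unfolding DesB_def by auto

lemma sym_perms_permutes: "x \<in> sym_perms n \<Longrightarrow> x permutes {1..n}"
  unfolding sym_perms_def by simp

lemma sym_perms_in_range: "x \<in> sym_perms n \<Longrightarrow> i \<in> {1..n} \<Longrightarrow> x i \<in> {1..n}"
  by (metis sym_perms_permutes permutes_in_image)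

lemma sym_perms_fixes: "x \<in> sym_perms n \<Longrightarrow> i \<notin> {1..n} \<Longrightarrow> x i = i"
  by (metis sym_perms_permutes permutes_not_in)

lemma sym_perms_inj: "x \<in> sym_perms n \<Longrightarrow> x i = x j \<Longrightarrow> i = j"
  by (metis sym_perms_permutes permutes_inj injD)

lemma finite_sym_perms: "finite (sym_perms n)"
  unfolding sym_perms_def using finite_permutations[of "{1..n}"] by simp

definition unsign :: "(int \<Rightarrow> int) \<Rightarrow> (nat \<Rightarrow> nat)" where
  "unsign w = (\<lambda>i. nat \<bar>w (int i)\<bar>)"

lemma unsign_sym_perms:
  assumes w: "w \<in> signed_perms n"
  shows "unsign w \<in> sym_perms n"
  unfolding sym_perms_def
proof (intro CollectI inj_imp_permutes)
  show "inj_on (unsign w) {1..n}"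
  proof (rule inj_onI)
    fix i j
    assume ij: "i \<in> {1..n}" "j \<in> {1..n}" "unsign w i = unsign w j"
    then have "w (int i) = w (int j) \<or> w (int i) = w (- int j)"
      using signed_perms_odd[OF w] by (auto simp: unsign_def abs_eq_iff)
    then show "i = j" using ij by (auto simp: inj_eq[OF inj_signed_perms[OF w]])
  qed
  show "unsign w i \<in> {1..n}" if "i \<in> {1..n}" for i
    using signed_perms_in_dom[OF w, of "int i"] that by (auto simp: unsign_def signed_dom_iff)
  show "unsign w i = i" if "i \<notin> {1..n}" for i
    using that signed_perms_fixes[OF w, of "int i"]
    by (cases "i = 0") (auto simp: unsign_def signed_dom_iff signed_perms_zero[OF w])
qed simp

lemma unsign_comp:
  assumes "u \<in> signed_perms n"
  shows "unsign (u \<circ> v) = unsign u \<circ> unsign v"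
proof
  fix i
  have "\<bar>u (v (int i))\<bar> = \<bar>u (int (nat \<bar>v (int i)\<bar>))\<bar>"
    using signed_perms_odd[OF assms, of "int (nat \<bar>v (int i)\<bar>)"]
    by (cases "v (int i) \<ge> 0") auto
  then show "unsign (u \<circ> v) i = (unsign u \<circ> unsign v) i"
    unfolding unsign_def by simp
qed

section \<open>Increasing signed permutations\<close>

text \<open>\<open>signed_subset n N\<close> contains exactly one of \<open>a, -a\<close> for each \<open>a \<in> {1..n}\<close>, the
  negative one iff \<open>a \<in> N\<close>. The signed permutation \<open>rank_perm n N\<close> maps it increasingly onto
  \<open>{1..n}\<close>; its inverse is the signed permutation \<open>u\<close> with \<open>u 1 < \<dots> < u n\<close> and these values.
  This gives the \<open>2\<^sup>n\<close> terms of \<open>XB n {0}\<close>.\<close>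

definition signed_subset :: "nat \<Rightarrow> nat set \<Rightarrow> int set" where
  "signed_subset n N = {t \<in> signed_dom n. t < 0 \<longleftrightarrow> nat \<bar>t\<bar> \<in> N}"

definition signed_rank :: "nat \<Rightarrow> nat set \<Rightarrow> int \<Rightarrow> nat" where
  "signed_rank n N t = card {s \<in> signed_subset n N. s \<le> t}"

definition rank_perm :: "nat \<Rightarrow> nat set \<Rightarrow> int \<Rightarrow> int" where
  "rank_perm n N t =
    (if t \<in> signed_subset n N then int (signed_rank n N t)
     else if - t \<in> signed_subset n N then - int (signed_rank n N (- t)) else t)"

lemma signed_subset_subset: "signed_subset n N \<subseteq> signed_dom n"
  unfolding signed_subset_def by auto

lemma finite_signed_subset [simp]: "finite (signed_subset n N)"
  by (rule finite_subset[OF signed_subset_subset]) simp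

lemma uminus_in_signed_subset_iff:
  "t \<in> signed_dom n \<Longrightarrow> - t \<in> signed_subset n N \<longleftrightarrow> t \<notin> signed_subset n N"
  unfolding signed_subset_def signed_dom_iff by auto

lemma card_signed_subset: "card (signed_subset n N) = n"
proof -
  have "bij_betw (\<lambda>t. nat \<bar>t\<bar>) (signed_subset n N) {1..n}"
  proof (rule bij_betwI')
    fix s t
    assume "s \<in> signed_subset n N" "t \<in> signed_subset n N"
    then show "nat \<bar>s\<bar> = nat \<bar>t\<bar> \<longleftrightarrow> s = t"
      unfolding signed_subset_def by (auto simp: abs_if split: if_splits)
  next
    fix t
    assume "t \<in> signed_subset n N"
    then show "nat \<bar>t\<bar> \<in> {1..n}"
      using signed_subset_subset by (force simp: signed_dom_iff)
  next
    fix a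
    assume a: "a \<in> {1..n}"
    then have "int a \<in> signed_dom n" unfolding signed_dom_iff by auto
    then have "int a \<in> signed_subset n N \<or> - int a \<in> signed_subset n N"
      using uminus_in_signed_subset_iff by blast
    then show "\<exists>t\<in>signed_subset n N. a = nat \<bar>t\<bar>"
      by (metis nat_int abs_minus_cancel abs_of_nat)
  qed
  then show ?thesis by (simp add: bij_betw_same_card)
qed

lemma signed_rank_pos: "t \<in> signed_subset n N \<Longrightarrow> 1 \<le> signed_rank n N t"
  unfolding signed_rank_def by (auto simp: Suc_le_eq card_gt_0_iff)

lemma signed_rank_le: "signed_rank n N t \<le> n"
  unfolding signed_rank_def using card_signed_subset[of n N]
  by (metis (no_types, lifting) card_mono finite_signed_subset mem_Collect_eq subsetI)

lemma signed_rank_strict_mono: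
  assumes "t \<in> signed_subset n N" "s < t"
  shows "signed_rank n N s < signed_rank n N t"
  unfolding signed_rank_def
proof (intro psubset_card_mono psubsetI)
  show "{s' \<in> signed_subset n N. s' \<le> s} \<noteq> {s \<in> signed_subset n N. s \<le> t}"
    using assms by (auto simp: set_eq_iff intro!: exI[of _ t])
qed (use assms in auto)

lemma signed_rank_less_iff:
  "s \<in> signed_subset n N \<Longrightarrow> t \<in> signed_subset n N \<Longrightarrow>
    signed_rank n N s < signed_rank n N t \<longleftrightarrow> s < t"
  using signed_rank_strict_mono[of t n N s] signed_rank_strict_mono[of s n N t]
  by (cases s t rule: linorder_cases) auto

lemma rank_perm_pos_iff:
  "t \<in> signed_dom n \<Longrightarrow> 0 < rank_perm n N t \<longleftrightarrow> t \<in> signed_subset n N"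
  using signed_rank_pos[of t n N] signed_rank_pos[of "- t" n N] uminus_in_signed_subset_iff[of t n N]
  by (auto simp: rank_perm_def)

lemma rank_perm_in_dom: "t \<in> signed_dom n \<Longrightarrow> rank_perm n N t \<in> signed_dom n"
  using signed_rank_pos[of t n N] signed_rank_pos[of "- t" n N] uminus_in_signed_subset_iff[of t n N]
    signed_rank_le[of n N t] signed_rank_le[of n N "- t"]
  by (auto simp: rank_perm_def signed_dom_iff)

lemma rank_perm_fixes: "t \<notin> signed_dom n \<Longrightarrow> rank_perm n N t = t"
  using signed_subset_subset[of n N] by (auto simp: rank_perm_def signed_dom_iff)

lemma rank_perm_odd: "rank_perm n N (- t) = - rank_perm n N t"
  using uminus_in_signed_subset_iff[of t n N] rank_perm_fixes[of t n N] rank_perm_fixes[of "- t" n N]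
  by (cases "t \<in> signed_dom n") (auto simp: rank_perm_def signed_dom_iff)

lemma rank_perm_less_iff:
  assumes "s \<in> signed_dom n" "t \<in> signed_dom n"
  shows "rank_perm n N s < rank_perm n N t \<longleftrightarrow>
    (s \<in> signed_subset n N \<longleftrightarrow> t \<in> signed_subset n N) \<and> s < t \<or>
    s \<notin> signed_subset n N \<and> t \<in> signed_subset n N"
proof (cases "s \<in> signed_subset n N \<longleftrightarrow> t \<in> signed_subset n N")
  case True
  have "- s \<in> signed_subset n N \<longleftrightarrow> s \<notin> signed_subset n N"
    "- t \<in> signed_subset n N \<longleftrightarrow> t \<notin> signed_subset n N"
    using uminus_in_signed_subset_iff assms by auto
  with True show ?thesis
    using signed_rank_less_iff[of s n N t] signed_rank_less_iff[of "- t" n N "- s"]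
    by (auto simp: rank_perm_def)
next
  case False
  then show ?thesis using rank_perm_pos_iff[OF assms(1), of N] rank_perm_pos_iff[OF assms(2), of N]
    by auto
qed

lemma rank_perm_signed_perms: "rank_perm n N \<in> signed_perms n"
proof (intro signed_permsI inj_imp_permutes)
  show "inj_on (rank_perm n N) (signed_dom n)"
    using rank_perm_less_iff[of _ n _ N] by (intro inj_onI) (metis linorder_neq_iff)
qed (simp_all add: rank_perm_in_dom rank_perm_fixes rank_perm_odd)

lemma bij_rank_perm: "bij (rank_perm n N)"
  using rank_perm_signed_perms by (rule bij_signed_perms)

lemma DesB_inv_rank_perm: "DesB n (inv (rank_perm n N)) \<subseteq> {0}"
proof
  fix i
  assume i: "i \<in> DesB n (inv (rank_perm n N))"
  show "i \<in> {0}"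
  proof (rule ccontr)
    assume "i \<notin> {0}"
    then have "1 \<le> i" "i < n" using i unfolding DesB_def by auto
    define s where "s = inv (rank_perm n N) (int i)"
    define t where "t = inv (rank_perm n N) (int i + 1)"
    have "int i \<in> signed_dom n" "int i + 1 \<in> signed_dom n"
      using \<open>1 \<le> i\<close> \<open>i < n\<close> unfolding signed_dom_iff by auto
    then have st: "s \<in> signed_dom n" "t \<in> signed_dom n"
      unfolding s_def t_def by (simp_all add: signed_perms_in_dom signed_perms_inv rank_perm_signed_perms)
    have r: "rank_perm n N s = int i" "rank_perm n N t = int i + 1"
      unfolding s_def t_def using bij_rank_perm by (simp_all add: surj_f_inv_f bij_is_surj)
    then have "0 < rank_perm n N s" "0 < rank_perm n N t" using \<open>1 \<le> i\<close> by auto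
    then have "s \<in> signed_subset n N" "t \<in> signed_subset n N"
      using rank_perm_pos_iff[OF st(1)] rank_perm_pos_iff[OF st(2)] by auto
    then have "s < t" using rank_perm_less_iff[OF st, of N] r by auto
    moreover have "t < s" using i unfolding DesB_def s_def t_def by auto
    ultimately show False by simp
  qed
qed

lemma rank_perm_inj:
  assumes "N \<subseteq> {1..n}" "M \<subseteq> {1..n}" "rank_perm n N = rank_perm n M"
  shows "N = M"
proof -
  have "a \<in> N \<longleftrightarrow> a \<in> M" if "a \<in> {1..n}" for a
  proof -
    have d: "- int a \<in> signed_dom n" and neg: "- int a < 0"
      using that unfolding signed_dom_iff by auto
    have "a \<in> N \<longleftrightarrow> 0 < rank_perm n N (- int a)"
      using rank_perm_pos_iff[OF d, of N] d neg by (simp add: signed_subset_def)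
    also have "\<dots> \<longleftrightarrow> a \<in> M"
      using rank_perm_pos_iff[OF d, of M] d neg assms(3) by (simp add: signed_subset_def)
    finally show ?thesis .
  qed
  then show ?thesis using assms(1,2) by blast
qed

lemma increasing_step:
  assumes "u \<in> signed_perms n" "DesB n u \<subseteq> {0}" "1 \<le> p" "p < int n"
  shows "u p < u (p + 1)"
proof -
  have "nat p \<notin> DesB n u" using assms(2,3) by auto
  then have "\<not> u (p + 1) < u p" using assms(3,4) unfolding DesB_def by auto
  moreover have "u p \<noteq> u (p + 1)" by (simp add: inj_eq[OF inj_signed_perms[OF assms(1)]])
  ultimately show ?thesis by simp
qed

lemma increasing_mono:
  assumes "u \<in> signed_perms n" "DesB n u \<subseteq> {0}" "1 \<le> p" "p < q" "q \<le> int n"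
  shows "u p < u q"
  using assms(4,5)
proof (induction q rule: int_gr_induct)
  case base
  then show ?case using increasing_step[OF assms(1-3)] by simp
next
  case (step q)
  then have "u p < u q" by simp
  also have "u q < u (q + 1)" using step assms(3) by (intro increasing_step[OF assms(1,2)]) auto
  finally show ?case .
qed

lemma increasing_le_iff:
  assumes "u \<in> signed_perms n" "DesB n u \<subseteq> {0}" "p \<in> {1..int n}" "q \<in> {1..int n}"
  shows "u p \<le> u q \<longleftrightarrow> p \<le> q"
  using increasing_mono[OF assms(1,2), of p q] increasing_mono[OF assms(1,2), of q p] assms(3,4)
  by (cases p q rule: linorder_cases) auto

lemma signed_perms_image_signed_subset:
  assumes u: "u \<in> signed_perms n"
  shows "\<exists>N\<in>Pow {1..n}. u ` {1..int n} = signed_subset n N"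
proof
  let ?P = "{1..int n}"
  define N where "N = {a \<in> {1..n}. - int a \<in> u ` ?P}"
  show "N \<in> Pow {1..n}" unfolding N_def by auto
  have "u i \<in> signed_subset n N" if i: "i \<in> ?P" for i
  proof -
    have d: "u i \<in> signed_dom n" using signed_perms_in_dom[OF u] i by (simp add: signed_dom_iff)
    have "- u i \<notin> u ` ?P"
    proof
      assume "- u i \<in> u ` ?P"
      then obtain j where "j \<in> ?P" "u j = u (- i)" using signed_perms_odd[OF u] by auto
      then show False using i by (auto simp: inj_eq[OF inj_signed_perms[OF u]])
    qed
    have a: "nat \<bar>u i\<bar> \<in> {1..n}" using d by (auto simp: signed_dom_iff)
    have "nat \<bar>u i\<bar> \<in> N \<longleftrightarrow> u i < 0"
    proof
      assume "nat \<bar>u i\<bar> \<in> N"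
      then have "- int (nat \<bar>u i\<bar>) \<in> u ` ?P" by (simp add: N_def)
      then show "u i < 0" using \<open>- u i \<notin> u ` ?P\<close> by (cases "u i < 0") auto
    next
      assume "u i < 0"
      then have "- int (nat \<bar>u i\<bar>) \<in> u ` ?P" using i by simp
      then show "nat \<bar>u i\<bar> \<in> N" using a by (simp add: N_def)
    qed
    then show ?thesis using d by (simp add: signed_subset_def)
  qed
  then have "u ` ?P \<subseteq> signed_subset n N" by blast
  moreover have "card (u ` ?P) = card (signed_subset n N)"
    using inj_on_subset[OF inj_signed_perms[OF u] subset_UNIV]
    by (simp add: card_image card_signed_subset)
  ultimately show "u ` ?P = signed_subset n N" by (rule card_subset_eq[OF finite_signed_subset])
qed

lemma signed_rank_increasing:
  assumes u: "u \<in> signed_perms n" "DesB n u \<subseteq> {0}" and N: "u ` {1..int n} = signed_subset n N"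
    and p: "p \<in> {1..int n}"
  shows "signed_rank n N (u p) = nat p"
proof -
  have "{s \<in> signed_subset n N. s \<le> u p} = u ` {q \<in> {1..int n}. u q \<le> u p}"
    unfolding N[symmetric] by auto
  also have "{q \<in> {1..int n}. u q \<le> u p} = {1..p}"
    using p increasing_le_iff[OF u(1,2) _ p] by auto
  finally have "{s \<in> signed_subset n N. s \<le> u p} = u ` {1..p}" .
  moreover have "inj_on u {1..p}" using inj_signed_perms[OF u(1)] by (rule inj_on_subset) simp
  ultimately show ?thesis using p by (simp add: signed_rank_def card_image)
qed

lemma rank_perm_increasing:
  assumes u: "u \<in> signed_perms n" "DesB n u \<subseteq> {0}" and N: "u ` {1..int n} = signed_subset n N"
  shows "rank_perm n N (u t) = t"
proof -
  have pos: "rank_perm n N (u p) = p" if "p \<in> {1..int n}" for p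
  proof -
    have "u p \<in> signed_subset n N" using N that by blast
    then show ?thesis using signed_rank_increasing[OF u N that] that by (simp add: rank_perm_def)
  qed
  have "t \<in> {1..int n} \<or> - t \<in> {1..int n} \<or> t \<notin> signed_dom n"
    by (auto simp: signed_dom_iff)
  then consider "t \<in> {1..int n}" | "- t \<in> {1..int n}" | "t \<notin> signed_dom n"
    by blast
  then show ?thesis
  proof cases
    case 1
    then show ?thesis by (rule pos)
  next
    case 2
    have "u t = - u (- t)" using signed_perms_odd[OF u(1), of "- t"] by simp
    then show ?thesis by (simp add: rank_perm_odd pos[OF 2])
  next
    case 3
    then show ?thesis by (simp add: signed_perms_fixes[OF u(1)] rank_perm_fixes)
  qed
qed

lemma bij_betw_inv_rank_perm:
  "bij_betw (\<lambda>N. inv (rank_perm n N)) (Pow {1..n}) {u \<in> signed_perms n. DesB n u \<subseteq> {0}}"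
proof (rule bij_betwI')
  fix N M
  assume NM: "N \<in> Pow {1..n}" "M \<in> Pow {1..n}"
  show "inv (rank_perm n N) = inv (rank_perm n M) \<longleftrightarrow> N = M"
  proof
    assume "inv (rank_perm n N) = inv (rank_perm n M)"
    then have "rank_perm n N = rank_perm n M" by (metis bij_rank_perm inv_inv_eq)
    then show "N = M" using rank_perm_inj NM by blast
  qed simp
next
  fix N
  show "inv (rank_perm n N) \<in> {u \<in> signed_perms n. DesB n u \<subseteq> {0}}"
    using signed_perms_inv[OF rank_perm_signed_perms] DesB_inv_rank_perm by auto
next
  fix u
  assume "u \<in> {u \<in> signed_perms n. DesB n u \<subseteq> {0}}"
  then have u: "u \<in> signed_perms n" "DesB n u \<subseteq> {0}" by auto
  obtain N where N: "N \<in> Pow {1..n}" "u ` {1..int n} = signed_subset n N"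
    using signed_perms_image_signed_subset[OF u(1)] by blast
  have "u = inv (rank_perm n N)"
    by (rule ext) (simp add: bij_inv_eq_iff[OF bij_rank_perm] rank_perm_increasing[OF u N(2)])
  with N(1) show "\<exists>N\<in>Pow {1..n}. u = inv (rank_perm n N)" by blast
qed

section \<open>Left multiplication by \<open>X\<^bsub>{0}\<^esub>\<close>\<close>

text \<open>\<open>rank_perm n N\<close> puts the complement of the signed subset below the subset and keeps the
  order within each part. So \<open>rank_perm n N \<circ> w\<close> has a descent at \<open>i > 0\<close> exactly at a sign
  change \<open>+ \<rightarrow> -\<close> or at a descent of \<open>w\<close> between letters that keep the same sign, where
  \<open>sign_pattern n w N\<close> is the set of positions that become negative.\<close>

definition sign_pattern :: "nat \<Rightarrow> (int \<Rightarrow> int) \<Rightarrow> nat set \<Rightarrow> nat set" where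
  "sign_pattern n w N = {i \<in> {1..n}. w (int i) \<notin> signed_subset n N}"

definition twisted_descents :: "nat \<Rightarrow> nat set \<Rightarrow> nat set \<Rightarrow> nat set" where
  "twisted_descents n E S = {i \<in> {0..<n}. (i = 0 \<and> 1 \<in> S) \<or>
      (0 < i \<and> ((i \<in> S \<longleftrightarrow> Suc i \<in> S) \<and> i \<in> E \<or> i \<notin> S \<and> Suc i \<in> S))}"

lemma DesB_rank_perm_comp:
  assumes w: "w \<in> signed_perms n"
  shows "DesB n (rank_perm n N \<circ> w) = twisted_descents n (DesB n w) (sign_pattern n w N)"
proof (rule set_eqI)
  fix i
  let ?S = "sign_pattern n w N"
  show "i \<in> DesB n (rank_perm n N \<circ> w) \<longleftrightarrow> i \<in> twisted_descents n (DesB n w) ?S"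
  proof (cases "i < n")
    case False
    then show ?thesis unfolding DesB_def twisted_descents_def by auto
  next
    case i: True
    have sgn: "j \<in> ?S \<longleftrightarrow> w (int j) \<notin> signed_subset n N" if "j \<in> {1..n}" for j
      using that by (simp add: sign_pattern_def)
    have dom: "w (int j) \<in> signed_dom n" if "j \<in> {1..n}" for j
      using that signed_perms_in_dom[OF w, of "int j"] by (simp add: signed_dom_iff)
    show ?thesis
    proof (cases "i = 0")
      case True
      have "rank_perm n N (w 0) = 0"
        using signed_perms_zero[OF w] rank_perm_fixes[of 0 n N] by (simp add: signed_dom_iff)
      moreover have "rank_perm n N (w 1) \<noteq> 0"
        using rank_perm_in_dom[OF dom[of 1]] i by (simp add: signed_dom_iff)
      ultimately show ?thesis
        using True i rank_perm_pos_iff[OF dom[of 1], of N] sgn[of 1]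
        by (auto simp: DesB_def twisted_descents_def)
    next
      case False
      have "i \<in> DesB n (rank_perm n N \<circ> w) \<longleftrightarrow>
          rank_perm n N (w (int (Suc i))) < rank_perm n N (w (int i))"
        using i by (simp add: DesB_def add.commute)
      also have "\<dots> \<longleftrightarrow> i \<in> twisted_descents n (DesB n w) ?S"
        using i False rank_perm_less_iff[OF dom dom, of "Suc i" i N] sgn[of i] sgn[of "Suc i"]
        by (auto simp: DesB_def twisted_descents_def add.commute)
      finally show ?thesis .
    qed
  qed
qed

lemma sign_pattern_iff:
  assumes "i \<in> {1..n}" "w \<in> signed_perms n"
  shows "i \<in> sign_pattern n w N \<longleftrightarrow> (w (int i) < 0 \<longleftrightarrow> unsign w i \<notin> N)"
proof -
  have "w (int i) \<in> signed_dom n"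
    using assms signed_perms_in_dom[of w n "int i"] by (simp add: signed_dom_iff)
  then show ?thesis
    using assms(1) by (simp add: sign_pattern_def signed_subset_def unsign_def)
qed

text \<open>\<open>sign_pattern n w N\<close> is the set of negative letters of \<open>w\<close> symmetrically differenced with
  the preimage of \<open>N\<close> under \<open>|w|\<close>, hence a bijection in \<open>N\<close>.\<close>

lemma bij_betw_sign_pattern:
  assumes w: "w \<in> signed_perms n"
  shows "bij_betw (sign_pattern n w) (Pow {1..n}) (Pow {1..n})"
proof -
  have inj: "inj_on (sign_pattern n w) (Pow {1..n})"
  proof (rule inj_onI)
    fix N M
    assume NM: "N \<in> Pow {1..n}" "M \<in> Pow {1..n}" "sign_pattern n w N = sign_pattern n w M"
    have img: "unsign w ` {1..n} = {1..n}"
      using unsign_sym_perms[OF w] by (simp add: sym_perms_def permutes_image)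
    show "N = M"
    proof (rule set_eqI)
      fix a
      show "a \<in> N \<longleftrightarrow> a \<in> M"
      proof (cases "a \<in> {1..n}")
        case True
        then have "a \<in> unsign w ` {1..n}" by (simp only: img)
        then obtain i where i: "i \<in> {1..n}" "a = unsign w i" by blast
        show ?thesis
          using sign_pattern_iff[OF i(1) w, of N] sign_pattern_iff[OF i(1) w, of M] NM(3) i(2)
          by blast
      next
        case False
        then show ?thesis using NM(1,2) by auto
      qed
    qed
  qed
  have sub: "sign_pattern n w ` Pow {1..n} \<subseteq> Pow {1..n}"
    unfolding sign_pattern_def by auto
  have "sign_pattern n w ` Pow {1..n} = Pow {1..n}"
    by (rule endo_inj_surj[OF _ sub inj]) simp
  with inj show ?thesis by (simp add: bij_betw_def)
qed

lemma XB0_mult_XB_apply: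
  assumes w: "w \<in> signed_perms n"
  shows "galg_mult (signed_perms n) (XB n {0}) (XB n K) w =
    (\<Sum>S\<in>Pow {1..n}. of_bool (twisted_descents n (DesB n w) S \<subseteq> K))"
proof -
  let ?U = "{u \<in> signed_perms n. DesB n u \<subseteq> {0}}"
  have "galg_mult (signed_perms n) (XB n {0}) (XB n K) w =
      (\<Sum>u\<in>signed_perms n. if DesB n u \<subseteq> {0} then XB n K (inv u \<circ> w) else 0)"
    unfolding galg_mult_signed_perms[OF w] by (rule sum.cong) (auto simp: XB_apply)
  also have "\<dots> = (\<Sum>u\<in>?U. XB n K (inv u \<circ> w))"
    by (rule sum.inter_filter[symmetric, OF finite_signed_perms])
  also have "\<dots> = (\<Sum>N\<in>Pow {1..n}. XB n K (inv (inv (rank_perm n N)) \<circ> w))"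
    by (rule sum.reindex_bij_betw[symmetric, OF bij_betw_inv_rank_perm])
  also have "\<dots> = (\<Sum>N\<in>Pow {1..n}. of_bool (twisted_descents n (DesB n w) (sign_pattern n w N) \<subseteq> K))"
    using bij_rank_perm
    by (simp add: inv_inv_eq XB_apply DesB_rank_perm_comp[OF w] signed_perms_comp[OF rank_perm_signed_perms w])
  also have "\<dots> = (\<Sum>S\<in>Pow {1..n}. of_bool (twisted_descents n (DesB n w) S \<subseteq> K))"
    by (rule sum.reindex_bij_betw[OF bij_betw_sign_pattern[OF w]])
  finally show ?thesis .
qed

text \<open>The sign patterns contributing to \<open>X\<^bsub>{0}\<^esub> X\<^sub>K\<close> have no change \<open>+ \<rightarrow> -\<close> outside \<open>K\<close>
  (position \<open>0\<close> counts as positive); a change \<open>- \<rightarrow> +\<close> outside \<open>K\<close> allows an extra descent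
  of \<open>w\<close> there.\<close>

definition admissible :: "nat \<Rightarrow> nat set \<Rightarrow> nat set set" where
  "admissible n K = {S \<in> Pow {1..n}. \<forall>i<n. i \<notin> K \<longrightarrow> i \<in> S \<or> Suc i \<notin> S}"

definition extra_descents :: "nat \<Rightarrow> nat set \<Rightarrow> nat set \<Rightarrow> nat set" where
  "extra_descents n K S = {i \<in> {1..<n}. i \<notin> K \<and> i \<in> S \<and> Suc i \<notin> S}"

lemma finite_admissible: "finite (admissible n K)"
  unfolding admissible_def by simp

lemma extra_descents_subset: "extra_descents n K S \<subseteq> {1..<n} - K"
  unfolding extra_descents_def by auto

lemma twisted_descents_subset_iff:
  assumes "E \<subseteq> {0..<n}" "S \<subseteq> {1..n}"
  shows "twisted_descents n E S \<subseteq> K \<longleftrightarrow>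
    S \<in> admissible n K \<and> E \<subseteq> insert 0 (K \<union> extra_descents n K S)"
proof -
  have "0 \<notin> S" using assms(2) by auto
  then show ?thesis
    using assms unfolding twisted_descents_def admissible_def extra_descents_def
    by (auto simp: subset_iff)
qed

lemma XB0_mult_XB:
  "galg_mult (signed_perms n) (XB n {0}) (XB n K) =
    (\<lambda>w. \<Sum>S\<in>admissible n K. XB n (insert 0 (K \<union> extra_descents n K S)) w)"
proof
  fix w
  show "galg_mult (signed_perms n) (XB n {0}) (XB n K) w =
      (\<Sum>S\<in>admissible n K. XB n (insert 0 (K \<union> extra_descents n K S)) w)"
  proof (cases "w \<in> signed_perms n")
    case True
    have "galg_mult (signed_perms n) (XB n {0}) (XB n K) w =
        (\<Sum>S\<in>Pow {1..n}. if S \<in> admissible n K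
          then XB n (insert 0 (K \<union> extra_descents n K S)) w else 0)"
      unfolding XB0_mult_XB_apply[OF True]
      by (rule sum.cong) (use True in \<open>auto simp: twisted_descents_subset_iff DesB_subset XB_apply\<close>)
    also have "\<dots> = (\<Sum>S\<in>{S \<in> Pow {1..n}. S \<in> admissible n K}.
        XB n (insert 0 (K \<union> extra_descents n K S)) w)"
      by (rule sum.inter_filter[symmetric]) simp
    also have "{S \<in> Pow {1..n}. S \<in> admissible n K} = admissible n K"
      unfolding admissible_def by blast
    finally show ?thesis .
  next
    case False
    then show ?thesis by (simp add: galg_mult_signed_perms_outside XB_apply)
  qed
qed

lemma XB0_mult_XB_in_IB0:
  assumes "0 < n" "K \<subseteq> {0..<n}"
  shows "galg_mult (signed_perms n) (XB n {0}) (XB n K) \<in> IB0 n"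
  unfolding XB0_mult_XB IB0_def
  by (intro qspan_sum finite_admissible qspan_generator)
    (use assms in \<open>auto simp: extra_descents_def\<close>)

lemma XB0_mult_XB_unitriangular:
  assumes "0 \<in> J"
  shows "(\<lambda>w. galg_mult (signed_perms n) (XB n {0}) (XB n J) w
      - of_nat (card {S \<in> admissible n J. extra_descents n J S = {}}) * XB n J w) =
    (\<lambda>w. \<Sum>S\<in>{S \<in> admissible n J. extra_descents n J S \<noteq> {}}. XB n (J \<union> extra_descents n J S) w)"
proof
  fix w
  let ?A = "admissible n J" and ?Q = "extra_descents n J"
  have "galg_mult (signed_perms n) (XB n {0}) (XB n J) w = (\<Sum>S\<in>?A. XB n (J \<union> ?Q S) w)"
    using assms by (simp add: XB0_mult_XB insert_absorb)
  also have "\<dots> = (\<Sum>S\<in>{S \<in> ?A. ?Q S = {}} \<union> {S \<in> ?A. ?Q S \<noteq> {}}. XB n (J \<union> ?Q S) w)"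
    by (rule sum.cong) auto
  also have "\<dots> = (\<Sum>S\<in>{S \<in> ?A. ?Q S = {}}. XB n (J \<union> ?Q S) w) +
      (\<Sum>S\<in>{S \<in> ?A. ?Q S \<noteq> {}}. XB n (J \<union> ?Q S) w)"
    by (rule sum.union_disjoint) (auto simp: finite_admissible)
  also have "(\<Sum>S\<in>{S \<in> ?A. ?Q S = {}}. XB n (J \<union> ?Q S) w) =
      of_nat (card {S \<in> ?A. ?Q S = {}}) * XB n J w"
    by simp
  finally show "galg_mult (signed_perms n) (XB n {0}) (XB n J) w
      - of_nat (card {S \<in> ?A. ?Q S = {}}) * XB n J w =
    (\<Sum>S\<in>{S \<in> ?A. ?Q S \<noteq> {}}. XB n (J \<union> ?Q S) w)" by simp
qed

lemma XB_in_span_XB0_mult: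
  assumes "0 < n" "J \<subseteq> {0..<n}" "0 \<in> J"
  shows "XB n J \<in> qspan (Pow {0..<n}) (\<lambda>K. galg_mult (signed_perms n) (XB n {0}) (XB n K))"
proof (rule qspan_triangular[where X = "XB n" and i = J and I = "{J \<in> Pow {0..<n}. 0 \<in> J}"
      and m = "\<lambda>J. card ({0..<n} - J)"])
  fix J
  assume J: "J \<in> {J \<in> Pow {0..<n}. 0 \<in> J}"
  let ?I = "{J' \<in> {J \<in> Pow {0..<n}. 0 \<in> J}. card ({0..<n} - J') < card ({0..<n} - J)}"
  let ?Q = "extra_descents n J"
  let ?c = "of_nat (card {S \<in> admissible n J. ?Q S = {}}) :: rat"
  have "{} \<in> {S \<in> admissible n J. ?Q S = {}}"
    unfolding admissible_def extra_descents_def by auto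
  then have "?c \<noteq> 0" using finite_admissible[of n J] by (auto simp: card_eq_0_iff)
  moreover have "J \<union> ?Q S \<in> ?I" if nonempty: "?Q S \<noteq> {}" for S
  proof -
    obtain x where x: "x \<in> ?Q S" using nonempty by blast
    have sub: "?Q S \<subseteq> {1..<n} - J" by (rule extra_descents_subset)
    have "x \<in> {0..<n} - J" "x \<notin> {0..<n} - (J \<union> ?Q S)" using x sub by auto
    then have "{0..<n} - (J \<union> ?Q S) \<subset> {0..<n} - J"
      by (intro psubsetI) blast+
    then have "card ({0..<n} - (J \<union> ?Q S)) < card ({0..<n} - J)"
      by (rule psubset_card_mono[rotated]) simp
    moreover have "J \<union> ?Q S \<subseteq> {0..<n}" "0 \<in> J \<union> ?Q S" using J sub by auto
    ultimately show ?thesis by simp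
  qed
  then have "(\<lambda>w. galg_mult (signed_perms n) (XB n {0}) (XB n J) w - ?c * XB n J w) \<in> qspan ?I (XB n)"
    using J unfolding XB0_mult_XB_unitriangular[OF CollectD[OF J, THEN conjunct2]]
    by (intro qspan_sum qspan_generator) (simp_all add: finite_admissible)
  ultimately show "\<exists>K\<in>Pow {0..<n}. \<exists>c. c \<noteq> 0 \<and>
      (\<lambda>w. galg_mult (signed_perms n) (XB n {0}) (XB n K) w - c * XB n J w) \<in> qspan ?I (XB n)"
    using J by (intro bexI[of _ J] exI[of _ ?c]) simp_all
qed (use assms in simp_all)

theorem IB0_eq_XB0_mult_SigmaB:
  assumes "0 < n"
  shows "IB0 n = (\<lambda>y. galg_mult (signed_perms n) (XB n {0}) y) ` SigmaB n"
proof -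
  have "(\<lambda>y. galg_mult (signed_perms n) (XB n {0}) y) ` SigmaB n =
      qspan (Pow {0..<n}) (\<lambda>K. galg_mult (signed_perms n) (XB n {0}) (XB n K))"
    unfolding SigmaB_def by (rule qspan_linear_image) (rule galg_mult_sum_right)
  moreover have "qspan (Pow {0..<n}) (\<lambda>K. galg_mult (signed_perms n) (XB n {0}) (XB n K)) \<subseteq> IB0 n"
    unfolding IB0_def using XB0_mult_XB_in_IB0[OF assms, unfolded IB0_def]
    by (intro qspan_subsetI) auto
  moreover have "IB0 n \<subseteq> qspan (Pow {0..<n}) (\<lambda>K. galg_mult (signed_perms n) (XB n {0}) (XB n K))"
    unfolding IB0_def using assms by (intro qspan_subsetI) (auto intro: XB_in_span_XB0_mult)
  ultimately show ?thesis by blast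
qed

section \<open>Forgetting signs\<close>

lemma galg_push_unsign_mult:
  "galg_push (signed_perms n) unsign (galg_mult (signed_perms n) a b) =
    galg_mult (sym_perms n) (galg_push (signed_perms n) unsign a) (galg_push (signed_perms n) unsign b)"
  by (rule galg_push_mult)
    (auto simp: finite_signed_perms finite_sym_perms unsign_sym_perms signed_perms_comp unsign_comp)

text \<open>The element of the fibre of \<open>unsign\<close> over \<open>x\<close> whose negative letters are the positions in \<open>S\<close>.\<close>

definition signed_lift :: "nat \<Rightarrow> (nat \<Rightarrow> nat) \<Rightarrow> nat set \<Rightarrow> int \<Rightarrow> int" where
  "signed_lift n x S t =
    (if t \<in> signed_dom n then sgn t * (if nat \<bar>t\<bar> \<in> S then -1 else 1) * int (x (nat \<bar>t\<bar>)) else t)"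

lemma signed_lift_of_nat:
  assumes "x \<in> sym_perms n" "i \<le> n"
  shows "signed_lift n x S (int i) = (if i \<in> S then - int (x i) else int (x i))"
  using assms sym_perms_fixes[of x n 0] unfolding signed_lift_def by (auto simp: signed_dom_iff)

lemma abs_signed_lift: "t \<in> signed_dom n \<Longrightarrow> \<bar>signed_lift n x S t\<bar> = int (x (nat \<bar>t\<bar>))"
  unfolding signed_lift_def by (auto simp: signed_dom_iff abs_mult abs_sgn_eq_1)

lemma signed_lift_signed_perms:
  assumes x: "x \<in> sym_perms n"
  shows "signed_lift n x S \<in> signed_perms n"
proof (intro signed_permsI inj_imp_permutes)
  have range: "x (nat \<bar>t\<bar>) \<in> {1..n}" if "t \<in> signed_dom n" for t
    using that by (intro sym_perms_in_range[OF x]) (auto simp: signed_dom_iff)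
  show "inj_on (signed_lift n x S) (signed_dom n)"
  proof (rule inj_onI)
    fix s t
    assume st: "s \<in> signed_dom n" "t \<in> signed_dom n" "signed_lift n x S s = signed_lift n x S t"
    then have "x (nat \<bar>s\<bar>) = x (nat \<bar>t\<bar>)" using abs_signed_lift by (metis of_nat_eq_iff)
    then have abs_eq: "\<bar>s\<bar> = \<bar>t\<bar>" using sym_perms_inj[OF x] by fastforce
    moreover have "0 < x (nat \<bar>s\<bar>)" using range[OF st(1)] by auto
    ultimately have "sgn s = sgn t"
      using st unfolding signed_lift_def by (auto split: if_splits)
    with abs_eq show "s = t" by (metis mult_sgn_abs)
  qed
  show "signed_lift n x S t \<in> signed_dom n" if "t \<in> signed_dom n" for t
  proof -
    have "\<bar>signed_lift n x S t\<bar> \<in> {1..int n}"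
      using abs_signed_lift[OF that, of x S] range[OF that] by auto
    then show ?thesis by (auto simp: signed_dom_iff)
  qed
qed (auto simp: signed_lift_def sgn_minus uminus_in_signed_dom_iff)

lemma unsign_signed_lift:
  assumes x: "x \<in> sym_perms n"
  shows "unsign (signed_lift n x S) = x"
proof
  fix i
  show "unsign (signed_lift n x S) i = x i"
  proof (cases "i \<in> {1..n}")
    case True
    then show ?thesis by (simp add: unsign_def signed_lift_of_nat[OF x])
  next
    case False
    then show ?thesis
      by (auto simp: unsign_def signed_lift_def signed_dom_iff sym_perms_fixes[OF x])
  qed
qed

lemma signed_perms_eq_signed_lift:
  assumes w: "w \<in> signed_perms n"
  shows "w = signed_lift n (unsign w) {i \<in> {1..n}. w (int i) < 0}"
proof
  fix t
  show "w t = signed_lift n (unsign w) {i \<in> {1..n}. w (int i) < 0} t"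
  proof (cases "t \<in> signed_dom n")
    case True
    then have i: "nat \<bar>t\<bar> \<in> {1..n}" by (auto simp: signed_dom_iff)
    have "w t = sgn t * w (int (nat \<bar>t\<bar>))"
      using True signed_perms_odd[OF w, of "int (nat \<bar>t\<bar>)"] by (cases "t > 0") (auto simp: signed_dom_iff)
    then show ?thesis using True i by (auto simp: signed_lift_def unsign_def)
  next
    case False
    then show ?thesis by (simp add: signed_lift_def signed_perms_fixes[OF w])
  qed
qed

lemma bij_betw_signed_lift:
  assumes x: "x \<in> sym_perms n"
  shows "bij_betw (signed_lift n x) (Pow {1..n}) {w \<in> signed_perms n. unsign w = x}"
proof (rule bij_betwI')
  fix S S'
  assume S: "S \<in> Pow {1..n}" "S' \<in> Pow {1..n}"
  have neg: "i \<in> T \<longleftrightarrow> signed_lift n x T (int i) < 0" if "i \<in> {1..n}" for i T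
    using that sym_perms_in_range[OF x that] by (auto simp: signed_lift_of_nat[OF x])
  show "signed_lift n x S = signed_lift n x S' \<longleftrightarrow> S = S'"
  proof
    assume eq: "signed_lift n x S = signed_lift n x S'"
    show "S = S'"
    proof (rule set_eqI)
      fix i
      show "i \<in> S \<longleftrightarrow> i \<in> S'"
      proof (cases "i \<in> {1..n}")
        case True
        then show ?thesis using neg[OF True, of S] neg[OF True, of S'] eq by simp
      next
        case False
        then show ?thesis using S by auto
      qed
    qed
  qed simp
next
  fix S
  show "signed_lift n x S \<in> {w \<in> signed_perms n. unsign w = x}"
    by (simp add: signed_lift_signed_perms[OF x] unsign_signed_lift[OF x])
next
  fix w
  assume "w \<in> {w \<in> signed_perms n. unsign w = x}"
  then show "\<exists>S\<in>Pow {1..n}. w = signed_lift n x S"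
    using signed_perms_eq_signed_lift by blast
qed

lemma galg_push_XB_apply:
  assumes x: "x \<in> sym_perms n"
  shows "galg_push (signed_perms n) unsign (XB n K) x =
    (\<Sum>S\<in>Pow {1..n}. of_bool (DesB n (signed_lift n x S) \<subseteq> K))"
  unfolding galg_push_def sum.reindex_bij_betw[OF bij_betw_signed_lift[OF x], symmetric]
  by (simp add: XB_apply signed_lift_signed_perms[OF x])

lemma sym_perms_Suc_neq:
  assumes x: "x \<in> sym_perms n" and "i < n"
  shows "x i \<noteq> x (Suc i)"
proof (cases "i = 0")
  case True
  then show ?thesis
    using sym_perms_fixes[OF x, of 0] sym_perms_in_range[OF x, of 1] assms(2) by auto
next
  case False
  then show ?thesis using sym_perms_inj[OF x, of i "Suc i"] by auto
qed

lemma signed_lift_descent_iff: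
  assumes x: "x \<in> sym_perms n" and i: "i < n"
  shows "signed_lift n x S (int i + 1) < signed_lift n x S (int i) \<longleftrightarrow>
    x i < x (Suc i) \<and> Suc i \<in> S \<or> x (Suc i) < x i \<and> i \<notin> S"
proof -
  have "signed_lift n x S (int i + 1) = signed_lift n x S (int (Suc i))" by (simp add: add.commute)
  also have "\<dots> = (if Suc i \<in> S then - int (x (Suc i)) else int (x (Suc i)))"
    using i by (intro signed_lift_of_nat[OF x]) simp
  finally have "signed_lift n x S (int i + 1) =
      (if Suc i \<in> S then - int (x (Suc i)) else int (x (Suc i)))" .
  moreover have "signed_lift n x S (int i) = (if i \<in> S then - int (x i) else int (x i))"
    using signed_lift_of_nat[OF x, of i] i by simp
  moreover have "1 \<le> x (Suc i)" using sym_perms_in_range[OF x, of "Suc i"] i by simp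
  moreover have "x i \<noteq> x (Suc i)" by (rule sym_perms_Suc_neq[OF x i])
  ultimately show ?thesis by auto
qed

text \<open>Outside \<open>K\<close>, a descent of \<open>x\<close> at \<open>i\<close> forces the letter \<open>i\<close> of a signed lift without
  descents outside \<open>K\<close> to be negative, and an ascent forces the letter \<open>i + 1\<close> to be positive.\<close>

definition forced_neg :: "nat \<Rightarrow> (nat \<Rightarrow> nat) \<Rightarrow> nat set \<Rightarrow> nat set" where
  "forced_neg n x K = {i \<in> {0..<n}. i \<notin> K \<and> x (Suc i) < x i}"

definition forced_pos :: "nat \<Rightarrow> (nat \<Rightarrow> nat) \<Rightarrow> nat set \<Rightarrow> nat set" where
  "forced_pos n x K = Suc ` {i \<in> {0..<n}. i \<notin> K \<and> x i < x (Suc i)}"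

lemma DesB_signed_lift_subset_iff:
  assumes x: "x \<in> sym_perms n"
  shows "DesB n (signed_lift n x S) \<subseteq> K \<longleftrightarrow> forced_neg n x K \<subseteq> S \<and> S \<inter> forced_pos n x K = {}"
proof -
  have "DesB n (signed_lift n x S) \<subseteq> K \<longleftrightarrow>
      (\<forall>i<n. i \<notin> K \<longrightarrow> \<not> (x i < x (Suc i) \<and> Suc i \<in> S \<or> x (Suc i) < x i \<and> i \<notin> S))"
    unfolding DesB_def using signed_lift_descent_iff[OF x] by auto
  also have "\<dots> \<longleftrightarrow> forced_neg n x K \<subseteq> S \<and> S \<inter> forced_pos n x K = {}"
    unfolding forced_neg_def forced_pos_def by auto
  finally show ?thesis .
qed

lemma forced_neg_subset:
  assumes x: "x \<in> sym_perms n"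
  shows "forced_neg n x K \<subseteq> {1..n}"
  using sym_perms_fixes[OF x, of 0] by (auto simp: forced_neg_def Suc_le_eq intro!: gr0I)

lemma forced_pos_subset: "forced_pos n x K \<subseteq> {1..n}"
  unfolding forced_pos_def by auto

lemma card_forced:
  assumes x: "x \<in> sym_perms n" and K: "K \<subseteq> {0..<n}"
  shows "card (forced_neg n x K) + card (forced_pos n x K) = n - card K"
proof -
  define A where "A = {i \<in> {0..<n}. i \<notin> K \<and> x i < x (Suc i)}"
  have "x (Suc i) < x i" if "i < n" "\<not> x i < x (Suc i)" for i
    using sym_perms_Suc_neq[OF x that(1)] that(2) by simp
  then have "forced_neg n x K \<union> A = {0..<n} - K"
    by (auto simp: forced_neg_def A_def)
  moreover have "forced_neg n x K \<inter> A = {}" "finite (forced_neg n x K)" "finite A"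
    unfolding forced_neg_def A_def by auto
  moreover have "card (forced_pos n x K) = card A"
    unfolding forced_pos_def A_def by (simp add: card_image)
  ultimately have "card (forced_neg n x K) + card (forced_pos n x K) = card ({0..<n} - K)"
    by (metis card_Un_disjoint)
  also have "\<dots> = n - card K" using K by (simp add: card_Diff_subset finite_subset)
  finally show ?thesis .
qed

lemma forced_disjoint_iff:
  "forced_neg n x K \<inter> forced_pos n x K = {} \<longleftrightarrow> Peak n x \<subseteq> K \<union> Suc ` K"
proof -
  have "p \<in> forced_neg n x K \<inter> forced_pos n x K \<longleftrightarrow> p \<in> Peak n x \<and> p \<notin> K \<union> Suc ` K" for p
    by (cases p) (auto simp: forced_neg_def forced_pos_def Peak_def)
  then show ?thesis by blast
qed

lemma card_Pow_between:
  assumes "finite U" "A \<subseteq> U" "B \<subseteq> U" "A \<inter> B = {}"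
  shows "card {S \<in> Pow U. A \<subseteq> S \<and> S \<inter> B = {}} = 2 ^ (card U - card A - card B)"
proof -
  have "bij_betw (\<lambda>T. T \<union> A) (Pow (U - A - B)) {S \<in> Pow U. A \<subseteq> S \<and> S \<inter> B = {}}"
    using assms by (intro bij_betwI[where g = "\<lambda>S. S - A"]) auto
  then have "card {S \<in> Pow U. A \<subseteq> S \<and> S \<inter> B = {}} = 2 ^ card (U - A - B)"
    using assms(1) by (simp flip: bij_betw_same_card add: card_Pow)
  also have "card (U - A - B) = card U - card A - card B"
  proof -
    have "card (U - A) = card U - card A"
      using assms by (simp add: card_Diff_subset finite_subset)
    moreover have "B \<subseteq> U - A" "finite B" using assms finite_subset by auto
    ultimately show ?thesis by (simp add: card_Diff_subset)
  qed
  finally show ?thesis .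
qed

definition theta :: "nat \<Rightarrow> nat set \<Rightarrow> ((nat \<Rightarrow> nat) \<Rightarrow> rat)" where
  "theta n K = gsum {x \<in> sym_perms n. Peak n x \<subseteq> K \<union> Suc ` K}"

lemma galg_push_XB:
  assumes K: "K \<subseteq> {0..<n}"
  shows "galg_push (signed_perms n) unsign (XB n K) = (\<lambda>x. 2 ^ card K * theta n K x)"
proof
  fix x
  show "galg_push (signed_perms n) unsign (XB n K) x = 2 ^ card K * theta n K x"
  proof (cases "x \<in> sym_perms n")
    case False
    have "unsign ` signed_perms n \<subseteq> sym_perms n" using unsign_sym_perms by blast
    then show ?thesis using False by (simp add: galg_push_outside theta_def gsum_def)
  next
    case x: True
    let ?neg = "forced_neg n x K" and ?pos = "forced_pos n x K"
    have "galg_push (signed_perms n) unsign (XB n K) x =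
        of_nat (card {S \<in> Pow {1..n}. ?neg \<subseteq> S \<and> S \<inter> ?pos = {}})"
      by (simp add: galg_push_XB_apply[OF x] DesB_signed_lift_subset_iff[OF x] of_bool_def
          sum.If_cases Int_def)
    also have "\<dots> = 2 ^ card K * theta n K x"
    proof (cases "?neg \<inter> ?pos = {}")
      case True
      have "n - card ?neg - card ?pos = card K"
        using card_forced[OF x K] card_mono[OF _ K] by simp
      then show ?thesis
        using True x forced_disjoint_iff[of n x K]
          card_Pow_between[OF _ forced_neg_subset[OF x] forced_pos_subset True]
        by (simp add: theta_def gsum_def)
    next
      case False
      then have "{S \<in> Pow {1..n}. ?neg \<subseteq> S \<and> S \<inter> ?pos = {}} = {}" by blast
      then show ?thesis using False forced_disjoint_iff[of n x K] by (simp add: theta_def gsum_def)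
    qed
    finally show ?thesis .
  qed
qed

section \<open>Peak algebras\<close>

lemma finite_Fam: "finite (Fam n)"
  by (rule finite_subset[of _ "Pow {1..n-1}"]) (auto simp: Fam_def)

lemma finite_FamC: "finite (FamC n)"
  unfolding FamC_def using finite_Fam by simp

lemma Peak_in_Fam: "Peak n x \<in> Fam n"
  unfolding Peak_def Fam_def by auto

lemma PeakC_eq_Peak_diff: "PeakC n x = Peak n x - {1}"
  unfolding PeakC_def Peak_def by auto

lemma PeakC_in_FamC: "PeakC n x \<in> FamC n"
  unfolding PeakC_def FamC_def Fam_def by auto

lemma theta_eq_sum_PP: "theta n K = (\<lambda>x. \<Sum>F\<in>{F \<in> Fam n. F \<subseteq> K \<union> Suc ` K}. PP n F x)"
  unfolding theta_def PP_def
  by (rule gsum_eq_sum_fibers[of "Fam n" "Peak n" _ "\<lambda>F. F \<subseteq> K \<union> Suc ` K"])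
    (auto simp: finite_Fam Peak_in_Fam)

text \<open>Peaks at \<open>1\<close> are irrelevant as soon as \<open>0 \<in> K\<close>, because \<open>1 = Suc 0\<close>.\<close>

lemma theta_eq_sum_PPC:
  assumes "0 \<in> K"
  shows "theta n K = (\<lambda>x. \<Sum>F\<in>{F \<in> FamC n. F \<subseteq> K \<union> Suc ` K}. PPC n F x)"
proof -
  have "Peak n x \<subseteq> K \<union> Suc ` K \<longleftrightarrow> PeakC n x \<subseteq> K \<union> Suc ` K" for x
    using assms by (auto simp: PeakC_eq_Peak_diff)
  then have "theta n K = gsum {x \<in> sym_perms n. PeakC n x \<subseteq> K \<union> Suc ` K}"
    unfolding theta_def by simp
  also have "\<dots> = (\<lambda>x. \<Sum>F\<in>{F \<in> FamC n. F \<subseteq> K \<union> Suc ` K}. PPC n F x)"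
    unfolding PPC_def
    by (rule gsum_eq_sum_fibers[of "FamC n" "PeakC n" _ "\<lambda>F. F \<subseteq> K \<union> Suc ` K"])
      (auto simp: finite_FamC PeakC_in_FamC)
  finally show ?thesis .
qed

lemma theta_in_PeakAlg: "theta n K \<in> PeakAlg n"
  unfolding theta_eq_sum_PP PeakAlg_def
  by (intro qspan_sum qspan_generator) (auto simp: finite_Fam)

lemma theta_in_PeakAlgC: "0 \<in> K \<Longrightarrow> theta n K \<in> PeakAlgC n"
  unfolding PeakAlgC_def
  by (subst theta_eq_sum_PPC) (auto simp: finite_FamC intro!: qspan_sum qspan_generator)

definition peak_weight :: "nat set \<Rightarrow> nat" where
  "peak_weight F = (\<Sum>f\<in>F. Suc f)"

text \<open>Moving each element of \<open>F'\<close> outside \<open>F\<close> up by one maps \<open>F'\<close> injectively into \<open>F\<close>.\<close>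

lemma peak_weight_less:
  assumes fin: "finite F" and sub: "F' \<subseteq> {p. p \<in> F \<or> Suc p \<in> F}"
    and nc: "\<forall>i\<in>F'. Suc i \<notin> F'" and ne: "F' \<noteq> F"
  shows "peak_weight F' < peak_weight F"
proof -
  define g where "g p = (if p \<in> F then p else Suc p)" for p
  have "F' \<subseteq> F \<union> (\<lambda>q. q - 1) ` F" using sub by force
  then have fin': "finite F'" by (rule finite_subset) (simp add: fin)
  have gF: "g ` F' \<subseteq> F" using sub unfolding g_def by auto
  have ginj: "inj_on g F'"
    using nc unfolding g_def by (intro inj_onI) (metis Suc_inject)
  have le: "(\<Sum>q\<in>g ` F'. Suc q) \<le> (\<Sum>q\<in>F. Suc q)" by (rule sum_mono2[OF fin gF]) simp
  show ?thesis
  proof (cases "F' \<subseteq> F")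
    case True
    with ne obtain q where q: "q \<in> F" "q \<notin> F'" by blast
    have "(\<Sum>q\<in>F. Suc q) = (\<Sum>q\<in>F - F'. Suc q) + (\<Sum>q\<in>F'. Suc q)"
      by (rule sum.subset_diff[OF True fin])
    moreover have "Suc q \<le> (\<Sum>q\<in>F - F'. Suc q)" using q fin by (intro member_le_sum) auto
    ultimately show ?thesis unfolding peak_weight_def by simp
  next
    case False
    then obtain p where p: "p \<in> F'" "p \<notin> F" by blast
    have "(\<Sum>p\<in>F'. Suc p) < (\<Sum>p\<in>F'. Suc (g p))"
      by (rule sum_strict_mono_ex1[OF fin']) (use p in \<open>auto simp: g_def\<close>)
    also have "\<dots> = (\<Sum>q\<in>g ` F'. Suc q)" by (simp add: sum.reindex[OF ginj])
    finally show ?thesis unfolding peak_weight_def using le by simp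
  qed
qed

lemma Suc_image_pred: "(\<And>f. f \<in> F \<Longrightarrow> 0 < f) \<Longrightarrow> Suc ` (\<lambda>f. f - 1) ` F = F"
  by (force simp: image_image)

lemma sum_remove_in_qspan:
  assumes "finite A" "a \<in> A" "finite I" "A - {a} \<subseteq> I"
  shows "(\<lambda>w. (\<Sum>b\<in>A. X b w) - 1 * X a w) \<in> qspan I X"
proof -
  have "(\<lambda>w. (\<Sum>b\<in>A. X b w) - 1 * X a w) = (\<lambda>w. \<Sum>b\<in>A - {a}. X b w)"
    using assms(1,2) by (simp add: sum.remove)
  also have "\<dots> \<in> qspan I X"
    using assms by (intro qspan_sum qspan_generator) auto
  finally show ?thesis .
qed

lemma peak_weight_less_shift:
  assumes F: "F \<in> Fam n" and F': "F' \<in> Fam n" "F' \<noteq> F" "F' \<subseteq> (\<lambda>f. f - 1) ` F \<union> F"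
  shows "peak_weight F' < peak_weight F"
proof (rule peak_weight_less)
  show "finite F" using F by (auto simp: Fam_def intro: finite_subset)
  show "F' \<subseteq> {p. p \<in> F \<or> Suc p \<in> F}" using F F'(3) by (force simp: Fam_def)
qed (use F' in \<open>simp_all add: Fam_def\<close>)

lemma PP_in_span_theta:
  assumes "F \<in> Fam n"
  shows "PP n F \<in> qspan (Pow {0..<n}) (theta n)"
proof (rule qspan_triangular[where X = "PP n" and i = F and I = "Fam n" and m = peak_weight])
  fix F
  assume F: "F \<in> Fam n"
  define K where "K = (\<lambda>f. f - 1) ` F"
  have F_sub: "F \<subseteq> {1..n-1}" using F by (simp add: Fam_def)
  then have cover: "K \<union> Suc ` K = (\<lambda>f. f - 1) ` F \<union> F"
    unfolding K_def by (subst Suc_image_pred) auto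
  have "f - 1 < n" if "f \<in> F" for f using F_sub that by force
  then have "K \<in> Pow {0..<n}" unfolding K_def by auto
  moreover have "{F' \<in> Fam n. F' \<subseteq> K \<union> Suc ` K} - {F} \<subseteq> {F' \<in> Fam n. peak_weight F' < peak_weight F}"
  proof
    fix F'
    assume "F' \<in> {F' \<in> Fam n. F' \<subseteq> K \<union> Suc ` K} - {F}"
    then have F': "F' \<in> Fam n" "F' \<noteq> F" "F' \<subseteq> K \<union> Suc ` K" by auto
    then show "F' \<in> {F' \<in> Fam n. peak_weight F' < peak_weight F}"
      using peak_weight_less_shift[OF F F'(1,2)] by (simp add: cover)
  qed
  then have "(\<lambda>w. theta n K w - 1 * PP n F w) \<in> qspan {F' \<in> Fam n. peak_weight F' < peak_weight F} (PP n)"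
    unfolding theta_eq_sum_PP using F cover by (intro sum_remove_in_qspan) (auto simp: finite_Fam)
  ultimately show "\<exists>k\<in>Pow {0..<n}. \<exists>c. c \<noteq> 0 \<and>
      (\<lambda>w. theta n k w - c * PP n F w) \<in> qspan {F' \<in> Fam n. peak_weight F' < peak_weight F} (PP n)"
    by (intro bexI[of _ K] exI[of _ 1]) simp_all
qed (simp_all add: finite_Fam assms)

lemma FamC_subset: "F \<in> FamC n \<Longrightarrow> F \<subseteq> {2..n-1}"
proof
  fix f
  assume "F \<in> FamC n" "f \<in> F"
  then have "f \<in> {1..n-1}" "f \<noteq> 1" unfolding FamC_def Fam_def by auto
  then show "f \<in> {2..n-1}" by simp
qed

lemma PPC_in_span_theta:
  assumes "0 < n" "F \<in> FamC n"
  shows "PPC n F \<in> qspan {K \<in> Pow {0..<n}. 0 \<in> K} (theta n)"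
proof (rule qspan_triangular[where X = "PPC n" and i = F and I = "FamC n" and m = peak_weight])
  fix F
  assume F: "F \<in> FamC n"
  define K where "K = insert 0 ((\<lambda>f. f - 1) ` F)"
  have K0: "0 \<in> K" unfolding K_def by simp
  have F_sub: "F \<subseteq> {2..n-1}" using F by (rule FamC_subset)
  have "Suc ` (\<lambda>f. f - 1) ` F = F" using F_sub by (intro Suc_image_pred) auto
  then have cover: "K \<union> Suc ` K = {0, 1} \<union> ((\<lambda>f. f - 1) ` F \<union> F)"
    unfolding K_def by auto
  have "f - 1 < n" if "f \<in> F" for f using F_sub that by force
  then have "K \<in> {K \<in> Pow {0..<n}. 0 \<in> K}" using assms(1) unfolding K_def by auto
  moreover have "{F' \<in> FamC n. F' \<subseteq> K \<union> Suc ` K} - {F} \<subseteq> {F' \<in> FamC n. peak_weight F' < peak_weight F}"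
  proof
    fix F'
    assume "F' \<in> {F' \<in> FamC n. F' \<subseteq> K \<union> Suc ` K} - {F}"
    then have F': "F' \<in> FamC n" "F' \<noteq> F" "F' \<subseteq> K \<union> Suc ` K" by auto
    have "F' \<subseteq> (\<lambda>f. f - 1) ` F \<union> F"
    proof
      fix p
      assume p: "p \<in> F'"
      then have "p \<in> {0, 1} \<union> ((\<lambda>f. f - 1) ` F \<union> F)" using F'(3) cover by blast
      moreover have "2 \<le> p" using FamC_subset[OF F'(1)] p by auto
      ultimately show "p \<in> (\<lambda>f. f - 1) ` F \<union> F" by auto
    qed
    with F F' show "F' \<in> {F' \<in> FamC n. peak_weight F' < peak_weight F}"
      using peak_weight_less_shift[of F n F'] by (simp add: FamC_def)
  qed
  then have "(\<lambda>w. theta n K w - 1 * PPC n F w) \<in>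
      qspan {F' \<in> FamC n. peak_weight F' < peak_weight F} (PPC n)"
    unfolding theta_eq_sum_PPC[OF K0]
    using F cover by (intro sum_remove_in_qspan) (auto simp: finite_FamC)
  ultimately show "\<exists>k\<in>{K \<in> Pow {0..<n}. 0 \<in> K}. \<exists>c. c \<noteq> 0 \<and>
      (\<lambda>w. theta n k w - c * PPC n F w) \<in> qspan {F' \<in> FamC n. peak_weight F' < peak_weight F} (PPC n)"
    by (intro bexI[of _ K] exI[of _ 1]) simp_all
qed (simp_all add: finite_FamC assms)

lemma PeakAlg_eq_span_theta: "PeakAlg n = qspan (Pow {0..<n}) (theta n)"
proof
  show "PeakAlg n \<subseteq> qspan (Pow {0..<n}) (theta n)"
    unfolding PeakAlg_def by (rule qspan_subsetI[OF finite_Fam]) (rule PP_in_span_theta)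
  show "qspan (Pow {0..<n}) (theta n) \<subseteq> PeakAlg n"
    unfolding PeakAlg_def by (rule qspan_subsetI) (simp_all add: theta_in_PeakAlg[unfolded PeakAlg_def])
qed

lemma PeakAlgC_eq_span_theta:
  assumes "0 < n"
  shows "PeakAlgC n = qspan {K \<in> Pow {0..<n}. 0 \<in> K} (theta n)"
proof
  show "PeakAlgC n \<subseteq> qspan {K \<in> Pow {0..<n}. 0 \<in> K} (theta n)"
    unfolding PeakAlgC_def by (rule qspan_subsetI[OF finite_FamC]) (rule PPC_in_span_theta[OF assms])
  show "qspan {K \<in> Pow {0..<n}. 0 \<in> K} (theta n) \<subseteq> PeakAlgC n"
    unfolding PeakAlgC_def by (rule qspan_subsetI) (simp_all add: theta_in_PeakAlgC[unfolded PeakAlgC_def])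
qed

lemma galg_push_SigmaB: "galg_push (signed_perms n) unsign ` SigmaB n = qspan (Pow {0..<n}) (theta n)"
proof -
  have "galg_push (signed_perms n) unsign ` SigmaB n =
      qspan (Pow {0..<n}) (\<lambda>K. galg_push (signed_perms n) unsign (XB n K))"
    unfolding SigmaB_def by (rule qspan_linear_image) (rule galg_push_sum)
  also have "\<dots> = qspan (Pow {0..<n}) (theta n)"
    by (rule qspan_rescale[where c = "\<lambda>K. 2 ^ card K"]) (simp_all add: galg_push_XB)
  finally show ?thesis .
qed

lemma half_galg_push_IB0:
  "(\<lambda>z x. 1 / 2 * galg_push (signed_perms n) unsign z x) ` IB0 n = qspan {K \<in> Pow {0..<n}. 0 \<in> K} (theta n)"
proof -
  have "(\<lambda>z x. 1 / 2 * galg_push (signed_perms n) unsign z x) ` IB0 n =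
      qspan {K \<in> Pow {0..<n}. 0 \<in> K} (\<lambda>K x. 1 / 2 * galg_push (signed_perms n) unsign (XB n K) x)"
    unfolding IB0_def
    by (rule qspan_linear_image) (simp add: galg_push_sum sum_distrib_left mult_ac)
  also have "\<dots> = qspan {K \<in> Pow {0..<n}. 0 \<in> K} (theta n)"
    by (rule qspan_rescale[where c = "\<lambda>K. 1 / 2 * 2 ^ card K"]) (auto simp: galg_push_XB)
  finally show ?thesis .
qed

lemma PPC_empty_eq_theta: "PPC n {} = theta n {0}"
proof -
  have "Peak n x \<subseteq> {0} \<union> Suc ` {0} \<longleftrightarrow> PeakC n x = {}" for x
    by (auto simp: PeakC_eq_Peak_diff Peak_def)
  then show ?thesis unfolding PPC_def theta_def by simp
qed

lemma PPC_empty_eq_half_push: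
  assumes "0 < n"
  shows "PPC n {} = (\<lambda>x. 1 / 2 * galg_push (signed_perms n) unsign (XB n {0}) x)"
  using assms by (simp add: PPC_empty_eq_theta galg_push_XB)

theorem proposition7p14:
  fixes n :: nat
  assumes "n \<ge> 1"
  shows "IB0 n = (\<lambda>y. galg_mult (signed_perms n) (XB n {0}) y) ` SigmaB n
         \<and> PeakAlgC n = (\<lambda>y. galg_mult (sym_perms n) (PPC n {}) y) ` PeakAlg n"
proof
  have n: "0 < n" using assms by simp
  let ?push = "galg_push (signed_perms n) unsign"
  show IB0: "IB0 n = (\<lambda>y. galg_mult (signed_perms n) (XB n {0}) y) ` SigmaB n"
    by (rule IB0_eq_XB0_mult_SigmaB[OF n])
  have "(\<lambda>y. galg_mult (sym_perms n) (PPC n {}) y) ` PeakAlg n =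
      (\<lambda>y. galg_mult (sym_perms n) (PPC n {}) (?push y)) ` SigmaB n"
    by (simp add: PeakAlg_eq_span_theta galg_push_SigmaB[symmetric] image_image)
  also have "\<dots> = (\<lambda>y. (\<lambda>z x. 1 / 2 * ?push z x) (galg_mult (signed_perms n) (XB n {0}) y)) ` SigmaB n"
    unfolding PPC_empty_eq_half_push[OF n] galg_mult_scale_left galg_push_unsign_mult ..
  also have "\<dots> = (\<lambda>z x. 1 / 2 * ?push z x) ` (\<lambda>y. galg_mult (signed_perms n) (XB n {0}) y) ` SigmaB n"
    by (simp only: image_image)
  also have "\<dots> = (\<lambda>z x. 1 / 2 * ?push z x) ` IB0 n" by (simp only: IB0)
  also have "\<dots> = PeakAlgC n" by (simp only: half_galg_push_IB0 PeakAlgC_eq_span_theta[OF n])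
  finally show "PeakAlgC n = (\<lambda>y. galg_mult (sym_perms n) (PPC n {}) y) ` PeakAlg n" ..
qed

end
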